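(* Suppose $pn\to\infty$ and $q\ln n\to\infty$ as $n\to\infty$, where $q=1-p$. Then for every $\varepsilon>0$ there exists $n_0$ such that for all $n\ge n_0$, $$u_2(n,p)\le(2+\varepsilon)\log_{\frac{1}{1-p}}(np)\quad\text{and}\quad u_2'(n,p)\le(2+\varepsilon)\log_{\frac{1}{1-p}}(np).$$
   Context: $G(n,p)$ is the Erdős–Rényi random graph on $n$ labelled vertices (vertex set $V$), each edge present independently with probability $p=p(n)$; $\mathbb{P}_{n,p}$ is the corresponding probability and $q=1-p$. A diameter graph in $\mathbb{R}^d$ is a graph $(V,E)$ with $V\subset\mathbb{R}^d$ finite and $E=\{\{\mathbf{x},\mathbf{y}\}\subseteq V: |\mathbf{x}-\mathbf{y}|=\operatorname{diam}V\}$, where $\operatorname{diam}V=\max_{\mathbf{x},\mathbf{y}\in V}|\mathbf{x}-\mathbf{y}|$ (Euclidean norm); a graph is a diameter graph in $\mathbb{R}^d$ if it is isomorphic to one. $u_d(n,p)$ is the largest positive integer $k$ such that $\mathbb{P}_{n,p}\big(\exists W\subseteq V,\ |W|=k,\ G[W]$ is a diameter graph in $\mathbb{R}^d$ and $\chi(G[W])=d+1\big)>\frac12$, where $G[W]$ is the induced subgraph; if no such $k$ exists, $u_d(n,p)=0$. $u_d'(n,p)$ is defined identically with the additional requirement that $G[W]$ be connected. *)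

theory Defs
  imports Complex_Main
begin

text \<open>Vertex set V = {0..<n}. A graph on V is a set of 2-element subsets of V.\<close>

definition all_edges :: "nat \<Rightarrow> nat set set" where
  "all_edges n = {e. e \<subseteq> {..<n} \<and> card e = 2}"

definition adj :: "nat set set \<Rightarrow> nat \<Rightarrow> nat \<Rightarrow> bool" where
  "adj Ed x y \<longleftrightarrow> x \<noteq> y \<and> {x, y} \<in> Ed"

text \<open>P_{n,p}(Q): probability that G(n,p) has property Q, each of the
  n choose 2 edges present independently with probability p.\<close>
definition prob_Gnp :: "nat \<Rightarrow> real \<Rightarrow> (nat set set \<Rightarrow> bool) \<Rightarrow> real" where
  "prob_Gnp n p Q =
     (\<Sum>Ed\<in>Pow (all_edges n).
        (if Q Ed then p ^ card Ed * (1 - p) ^ (card (all_edges n) - card Ed) else 0))"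

definition euclid_dist :: "nat \<Rightarrow> (nat \<Rightarrow> real) \<Rightarrow> (nat \<Rightarrow> real) \<Rightarrow> real" where
  "euclid_dist d x y = sqrt (\<Sum>i<d. (x i - y i)^2)"

definition point_in_R :: "nat \<Rightarrow> (nat \<Rightarrow> real) \<Rightarrow> bool" where
  "point_in_R d x \<longleftrightarrow> (\<forall>i\<ge>d. x i = 0)"

definition diam_R :: "nat \<Rightarrow> (nat \<Rightarrow> real) set \<Rightarrow> real" where
  "diam_R d S = Max {euclid_dist d x y | x y. x \<in> S \<and> y \<in> S}"

definition is_diameter_graph :: "nat \<Rightarrow> 'v set \<Rightarrow> ('v \<Rightarrow> 'v \<Rightarrow> bool) \<Rightarrow> bool" where
  "is_diameter_graph d W E \<longleftrightarrow>
     (\<exists>f. (\<forall>v\<in>W. point_in_R d (f v)) \<and> inj_on f W \<and>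
          (\<forall>x\<in>W. \<forall>y\<in>W. x \<noteq> y \<longrightarrow>
              (E x y \<longleftrightarrow> euclid_dist d (f x) (f y) = diam_R d (f ` W))))"

definition proper_colouring :: "'v set \<Rightarrow> ('v \<Rightarrow> 'v \<Rightarrow> bool) \<Rightarrow> nat \<Rightarrow> ('v \<Rightarrow> nat) \<Rightarrow> bool" where
  "proper_colouring W E k c \<longleftrightarrow>
     (\<forall>v\<in>W. c v < k) \<and> (\<forall>x\<in>W. \<forall>y\<in>W. E x y \<longrightarrow> c x \<noteq> c y)"

definition chromatic_number :: "'v set \<Rightarrow> ('v \<Rightarrow> 'v \<Rightarrow> bool) \<Rightarrow> nat" where
  "chromatic_number W E = (LEAST k. \<exists>c. proper_colouring W E k c)"

definition connected_graph :: "'v set \<Rightarrow> ('v \<Rightarrow> 'v \<Rightarrow> bool) \<Rightarrow> bool" where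
  "connected_graph W E \<longleftrightarrow>
     (\<forall>x\<in>W. \<forall>y\<in>W. (x, y) \<in> {(a, b). a \<in> W \<and> b \<in> W \<and> E a b}\<^sup>*)"

text \<open>Induced subgraph G[W] is (W, adj Ed restricted to W); since all
  quantifiers above range over W, we simply pass W and adj Ed.\<close>

definition good_set :: "nat \<Rightarrow> bool \<Rightarrow> nat set set \<Rightarrow> nat set \<Rightarrow> bool" where
  "good_set d conn Ed W \<longleftrightarrow>
     is_diameter_graph d W (adj Ed) \<and> chromatic_number W (adj Ed) = d + 1 \<and>
     (conn \<longrightarrow> connected_graph W (adj Ed))"

definition u_gen :: "nat \<Rightarrow> bool \<Rightarrow> nat \<Rightarrow> real \<Rightarrow> nat" where
  "u_gen d conn n p =
     (if \<exists>k>0. prob_Gnp n p (\<lambda>Ed. \<exists>W\<subseteq>{..<n}. card W = k \<and> good_set d conn Ed W) > 1/2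
      then (GREATEST k. k > 0 \<and>
              prob_Gnp n p (\<lambda>Ed. \<exists>W\<subseteq>{..<n}. card W = k \<and> good_set d conn Ed W) > 1/2)
      else 0)"

definition u :: "nat \<Rightarrow> nat \<Rightarrow> real \<Rightarrow> nat" where
  "u d n p = u_gen d False n p"

definition u' :: "nat \<Rightarrow> nat \<Rightarrow> real \<Rightarrow> nat" where
  "u' d n p = u_gen d True n p"

end

theory Submission
  imports Defs "HOL-Analysis.Analysis" "HOL-Real_Asymp.Real_Asymp"
begin

text \<open>A planar diameter graph has at most as many edges as vertices (Hopf--Pannwitz): if a vertex
  has three neighbours, they lie on the circle of radius \<open>D\<close> around it, and the middle one can
  have no other neighbour. The same bound holds for every vertex subset, so a set witnessing
  \<open>u\<^sub>2(n,p) \<ge> k\<close> contains a \<open>k\<close>-set spanning at most \<open>k\<close> edges. For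
  \<open>k = \<lceil>(2 + 2\<delta>) log\<^bsub>1/q\<^esub> (np)\<rceil>\<close> a union bound over \<open>k\<close>-sets, combined with the
  exponential moment \<open>E t\<^bsup>e(S)\<^esup> = (pt + q)\<^bsup>k choose 2\<^esup>\<close> for \<open>t = 2q/((k - 1)p)\<close>,
  shows that such a set exists with probability at most \<open>1/2\<close>.\<close>

section \<open>Points on a circle\<close>

lemma power2_dist_eq_inner:
  fixes w x :: "'a::real_inner"
  shows "(dist w x)\<^sup>2 = (norm w)\<^sup>2 - 2 * inner w x + (norm x)\<^sup>2"
  by (simp add: dist_norm power2_norm_eq_inner inner_diff inner_commute)

lemma inner_less_of_norm_eq:
  fixes a c :: "'a::real_inner"
  assumes "norm a = D" "norm c = D" "a \<noteq> c"
  shows "inner a c < D\<^sup>2"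
proof -
  have "0 < (dist a c)\<^sup>2" using assms(3) by simp
  thus ?thesis using power2_dist_eq_inner[of a c] assms(1,2) by simp
qed

text \<open>A point of the circle lying strictly inside the cone of two others lies beyond their
  chord, so the coefficients sum to more than 1; the far point \<open>w\<close> then satisfies
  \<open>|w|\<^sup>2 = 2\<langle>w,b\<rangle> \<ge> (l + m) |w|\<^sup>2\<close>.\<close>
lemma far_point_from_cone_middle_eq_0:
  fixes a b c w :: "'a::real_inner"
  assumes norms: "norm a = D" "norm b = D" "norm c = D"
    and distinct: "a \<noteq> c" "b \<noteq> a" "b \<noteq> c"
    and cone: "b = l *\<^sub>R a + m *\<^sub>R c" "0 \<le> l" "0 \<le> m"
    and far: "dist w b = D" "dist w a \<le> D" "dist w c \<le> D"
  shows "w = 0"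
proof -
  have "D > 0" using norms distinct by (metis norm_eq_zero norm_ge_zero order_less_le)
  have l0: "l > 0"
  proof (rule ccontr)
    assume "\<not> l > 0"
    with cone have "b = m *\<^sub>R c" by simp
    with norms \<open>D > 0\<close> cone(3) have "m = 1" by simp
    with \<open>b = m *\<^sub>R c\<close> distinct show False by simp
  qed
  have m0: "m > 0"
  proof (rule ccontr)
    assume "\<not> m > 0"
    with cone have "b = l *\<^sub>R a" by simp
    with norms \<open>D > 0\<close> cone(2) have "l = 1" by simp
    with \<open>b = l *\<^sub>R a\<close> distinct show False by simp
  qed
  have "D\<^sup>2 = inner b b" using norms(2) power2_norm_eq_inner by metis
  also have "\<dots> = l\<^sup>2 * (norm a)\<^sup>2 + m\<^sup>2 * (norm c)\<^sup>2 + 2 * l * m * inner a c"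
    unfolding cone(1) power2_norm_eq_inner
    by (simp add: inner_commute power2_eq_square algebra_simps)
  also have "\<dots> < l\<^sup>2 * D\<^sup>2 + m\<^sup>2 * D\<^sup>2 + 2 * l * m * D\<^sup>2"
    using inner_less_of_norm_eq[OF norms(1,3) distinct(1)] l0 m0 norms by simp
  also have "\<dots> = (l + m)\<^sup>2 * D\<^sup>2" by (simp add: power2_sum algebra_simps)
  finally have "1 < (l + m)\<^sup>2" using \<open>D > 0\<close> by simp
  hence lm: "1 < l + m" using l0 m0 power_le_one[of "l + m" 2] by linarith
  have w_sq: "(norm w)\<^sup>2 = 2 * inner w x" if "norm x = D" "dist w x = D" for x
    using power2_dist_eq_inner[of w x] that by simp
  have w_sq_le: "(norm w)\<^sup>2 \<le> 2 * inner w x" if "norm x = D" "dist w x \<le> D" for x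
    using power2_dist_eq_inner[of w x] that power_mono[of "dist w x" D 2] by simp
  have "(l + m) * (norm w)\<^sup>2 \<le> l * (2 * inner w a) + m * (2 * inner w c)"
    using w_sq_le[OF norms(1) far(2)] w_sq_le[OF norms(3) far(3)] cone(2,3)
    by (simp add: distrib_right add_mono mult_left_mono)
  also have "\<dots> = (norm w)\<^sup>2"
    unfolding w_sq[OF norms(2) far(1)] cone(1) by (simp add: algebra_simps)
  finally have "(l + m - 1) * (norm w)\<^sup>2 \<le> 0" by (simp add: algebra_simps)
  with lm have "(norm w)\<^sup>2 \<le> 0" by (simp add: mult_le_0_iff)
  thus ?thesis by simp
qed

definition cross2 :: "real \<times> real \<Rightarrow> real \<times> real \<Rightarrow> real" where
  "cross2 x y = fst x * snd y - snd x * fst y"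

lemma power2_cross2_plus_power2_inner:
  "(cross2 x y)\<^sup>2 + (inner x y)\<^sup>2 = (norm x)\<^sup>2 * (norm y)\<^sup>2"
  unfolding power2_norm_eq_inner
  by (cases x, cases y) (simp add: cross2_def power2_eq_square algebra_simps)

lemma cross2_linear_relation:
  "cross2 b c *\<^sub>R a + cross2 c a *\<^sub>R b + cross2 a b *\<^sub>R c = 0"
  by (cases a, cases b, cases c) (simp add: cross2_def zero_prod_def algebra_simps)

lemma inner_pos_of_dist_le:
  fixes x y :: "'a::real_inner"
  assumes "norm x = D" "norm y = D" "dist x y \<le> D" "D > 0"
  shows "inner x y > 0"
proof -
  have "(dist x y)\<^sup>2 \<le> D\<^sup>2" using assms by (simp add: power_mono)
  moreover have "0 < D * D" using assms(4) by simp
  ultimately show ?thesis using power2_dist_eq_inner[of x y] assms(1,2) by (simp add: power2_eq_square)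
qed

lemma cross2_neq_0:
  assumes "norm x = D" "norm y = D" "x \<noteq> y" "inner x y > 0"
  shows "cross2 x y \<noteq> 0"
proof
  assume "cross2 x y = 0"
  hence "(inner x y)\<^sup>2 = (D\<^sup>2)\<^sup>2"
    using power2_cross2_plus_power2_inner[of x y] assms(1,2) by (simp add: power2_eq_square)
  hence "inner x y = D\<^sup>2" using assms(4) power2_eq_iff_nonneg[of "inner x y" "D\<^sup>2"] by simp
  hence "dist x y = 0" using power2_dist_eq_inner[of x y] assms(1,2) by simp
  with assms(3) show False by simp
qed

definition in_cone :: "'a::real_vector \<Rightarrow> 'a \<Rightarrow> 'a \<Rightarrow> bool" where
  "in_cone b a c \<longleftrightarrow> (\<exists>l m. 0 \<le> l \<and> 0 \<le> m \<and> b = l *\<^sub>R a + m *\<^sub>R c)"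

lemma in_cone_of_linear_relation:
  fixes a b c :: "'a::real_vector"
  assumes "\<alpha> *\<^sub>R a + \<beta> *\<^sub>R b + \<gamma> *\<^sub>R c = 0" "\<beta> \<noteq> 0" "\<alpha> * \<beta> \<le> 0" "\<gamma> * \<beta> \<le> 0"
  shows "in_cone b a c"
  unfolding in_cone_def
proof (intro exI conjI)
  show "0 \<le> - \<alpha> / \<beta>" "0 \<le> - \<gamma> / \<beta>"
    using assms(2-4) by (auto simp: mult_le_0_iff divide_nonneg_neg divide_nonpos_pos divide_nonpos_neg divide_nonneg_pos)
  have "\<beta> *\<^sub>R b = - \<alpha> *\<^sub>R a - \<gamma> *\<^sub>R c" using assms(1) by (simp add: algebra_simps eq_neg_iff_add_eq_0)
  hence "b = inverse \<beta> *\<^sub>R (- \<alpha> *\<^sub>R a - \<gamma> *\<^sub>R c)"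
    using assms(2) by (metis scaleR_scaleR left_inverse scaleR_one)
  thus "b = (- \<alpha> / \<beta>) *\<^sub>R a + (- \<gamma> / \<beta>) *\<^sub>R c"
    by (simp add: divide_inverse_commute scaleR_diff_right)
qed

lemma one_of_three_in_cone:
  fixes a b c :: "real \<times> real"
  assumes norms: "norm a = D" "norm b = D" "norm c = D"
    and distinct: "a \<noteq> b" "b \<noteq> c" "a \<noteq> c"
    and dists: "dist a b \<le> D" "dist b c \<le> D" "dist a c \<le> D"
  shows "in_cone b a c \<or> in_cone a b c \<or> in_cone c a b"
proof -
  have "D > 0" using norms distinct by (metis norm_eq_zero norm_ge_zero order_less_le)
  define \<alpha> \<beta> \<gamma> where "\<alpha> = cross2 b c" "\<beta> = cross2 c a" "\<gamma> = cross2 a b"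
  have rel: "\<alpha> *\<^sub>R a + \<beta> *\<^sub>R b + \<gamma> *\<^sub>R c = 0"
    unfolding \<alpha>_\<beta>_\<gamma>_def by (rule cross2_linear_relation)
  have ab: "inner a b > 0" and bc: "inner b c > 0" and ac: "inner a c > 0"
    using inner_pos_of_dist_le \<open>D > 0\<close> norms dists by metis+
  have nz: "\<alpha> \<noteq> 0" "\<beta> \<noteq> 0" "\<gamma> \<noteq> 0"
    unfolding \<alpha>_\<beta>_\<gamma>_def using cross2_neq_0 norms distinct ab bc ac
    by (metis inner_commute)+
  txt \<open>Taking the inner product of the relation with \<open>a\<close> shows that the three
    coefficients cannot all have the same sign.\<close>
  have "\<alpha> * D\<^sup>2 + \<beta> * inner a b + \<gamma> * inner a c = inner a (\<alpha> *\<^sub>R a + \<beta> *\<^sub>R b + \<gamma> *\<^sub>R c)"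
    using norms(1) by (simp add: power2_norm_eq_inner[symmetric] inner_add_right)
  hence dot: "\<alpha> * D\<^sup>2 + \<beta> * inner a b + \<gamma> * inner a c = 0" using rel by simp
  have mixed: "\<not> (\<alpha> > 0 \<and> \<beta> > 0 \<and> \<gamma> > 0)" "\<not> (\<alpha> < 0 \<and> \<beta> < 0 \<and> \<gamma> < 0)"
    using dot \<open>D > 0\<close> ab ac
    by (smt (verit) mult_pos_pos mult_neg_pos zero_less_power)+
  have rel_a: "\<beta> *\<^sub>R b + \<alpha> *\<^sub>R a + \<gamma> *\<^sub>R c = 0" and rel_c: "\<alpha> *\<^sub>R a + \<gamma> *\<^sub>R c + \<beta> *\<^sub>R b = 0"
    using rel by (simp_all add: algebra_simps)
  consider "\<alpha> * \<beta> \<le> 0" "\<gamma> * \<beta> \<le> 0" | "\<beta> * \<alpha> \<le> 0" "\<gamma> * \<alpha> \<le> 0" | "\<alpha> * \<gamma> \<le> 0" "\<beta> * \<gamma> \<le> 0"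
    using mixed nz by (auto simp: mult_le_0_iff) (smt (verit))+
  thus ?thesis
    using in_cone_of_linear_relation[OF rel nz(2)] in_cone_of_linear_relation[OF rel_a nz(1)]
      in_cone_of_linear_relation[OF rel_c nz(3)]
    by cases blast+
qed

definition diameter_config :: "'v set \<Rightarrow> ('v \<Rightarrow> 'v \<Rightarrow> bool) \<Rightarrow> ('v \<Rightarrow> real \<times> real) \<Rightarrow> real \<Rightarrow> bool"
  where "diameter_config W E g D \<longleftrightarrow> inj_on g W \<and> (\<forall>x\<in>W. \<forall>y\<in>W. dist (g x) (g y) \<le> D) \<and>
     (\<forall>x\<in>W. \<forall>y\<in>W. x \<noteq> y \<longrightarrow> (E x y \<longleftrightarrow> dist (g x) (g y) = D))"

lemma diameter_config_norm_diff_eq: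
  assumes "diameter_config W E g D" "v \<in> W" "x \<in> W" "v \<noteq> x" "E v x"
  shows "norm (g x - g v) = D"
  using assms unfolding diameter_config_def by (simp add: dist_norm norm_minus_commute)

lemma diameter_config_middle_neighbour:
  assumes cfg: "diameter_config W E g D" and in_W: "v \<in> W" "x \<in> W" "y \<in> W" "z \<in> W"
    and distinct: "v \<notin> {x, y, z}" "x \<noteq> y" "x \<noteq> z" "y \<noteq> z"
    and edges: "E v x" "E v y" "E v z"
    and cone: "in_cone (g x - g v) (g y - g v) (g z - g v)"
    and w: "w \<in> W" "w \<noteq> x" "E x w"
  shows "w = v"
proof -
  from cfg have inj: "inj_on g W" and le: "\<And>a b. a \<in> W \<Longrightarrow> b \<in> W \<Longrightarrow> dist (g a) (g b) \<le> D"
    and eq: "\<And>a b. a \<in> W \<Longrightarrow> b \<in> W \<Longrightarrow> a \<noteq> b \<Longrightarrow> E a b \<longleftrightarrow> dist (g a) (g b) = D"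
    unfolding diameter_config_def by auto
  have neq: "g a - g v \<noteq> g b - g v" if "a \<in> W" "b \<in> W" "a \<noteq> b" for a b
    using inj_onD[OF inj _ that(1,2)] that(3) by auto
  have shift: "dist (g a - g v) (g b - g v) = dist (g a) (g b)" for a b
    by (simp add: dist_norm)
  have norm: "norm (g u - g v) = D" if "u \<in> {x, y, z}" for u
    using diameter_config_norm_diff_eq[OF cfg in_W(1)] that in_W distinct edges by auto
  obtain l m where lm: "g x - g v = l *\<^sub>R (g y - g v) + m *\<^sub>R (g z - g v)" "0 \<le> l" "0 \<le> m"
    using cone unfolding in_cone_def by blast
  have "g w - g v = 0"
  proof (rule far_point_from_cone_middle_eq_0[OF norm norm norm _ _ _ lm])
    show "g y - g v \<noteq> g z - g v" "g x - g v \<noteq> g y - g v" "g x - g v \<noteq> g z - g v"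
      using neq in_W distinct by auto
    show "dist (g w - g v) (g x - g v) = D"
      using eq[OF in_W(2) w(1)] w by (simp add: shift dist_commute)
    show "dist (g w - g v) (g y - g v) \<le> D" "dist (g w - g v) (g z - g v) \<le> D"
      using le w(1) in_W by (simp_all add: shift)
  qed simp_all
  thus ?thesis using inj_onD[OF inj _ w(1) in_W(1)] by simp
qed

lemma diameter_config_three_neighbours:
  assumes cfg: "diameter_config W E g D" and in_W: "v \<in> W" "a \<in> W" "b \<in> W" "c \<in> W"
    and distinct: "v \<notin> {a, b, c}" "a \<noteq> b" "b \<noteq> c" "a \<noteq> c"
    and edges: "E v a" "E v b" "E v c"
  shows "\<exists>z\<in>{a, b, c}. \<forall>w\<in>W. w \<noteq> z \<longrightarrow> E z w \<longrightarrow> w = v"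
proof -
  from cfg have inj: "inj_on g W" and le: "\<And>x y. x \<in> W \<Longrightarrow> y \<in> W \<Longrightarrow> dist (g x) (g y) \<le> D"
    unfolding diameter_config_def by auto
  have neq: "g x - g v \<noteq> g y - g v" if "x \<in> W" "y \<in> W" "x \<noteq> y" for x y
    using inj_onD[OF inj _ that(1,2)] that(3) by auto
  have shift: "dist (g x - g v) (g y - g v) = dist (g x) (g y)" for x y
    by (simp add: dist_norm)
  have "in_cone (g b - g v) (g a - g v) (g c - g v) \<or> in_cone (g a - g v) (g b - g v) (g c - g v) \<or>
        in_cone (g c - g v) (g a - g v) (g b - g v)"
  proof (rule one_of_three_in_cone)
    show "norm (g a - g v) = D" "norm (g b - g v) = D" "norm (g c - g v) = D"
      using diameter_config_norm_diff_eq[OF cfg in_W(1)] in_W distinct edges by auto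
    show "g a - g v \<noteq> g b - g v" "g b - g v \<noteq> g c - g v" "g a - g v \<noteq> g c - g v"
      using neq in_W distinct by auto
    show "dist (g a - g v) (g b - g v) \<le> D" "dist (g b - g v) (g c - g v) \<le> D"
      "dist (g a - g v) (g c - g v) \<le> D"
      using le in_W by (simp_all add: shift)
  qed
  then show ?thesis
  proof (elim disjE)
    assume "in_cone (g b - g v) (g a - g v) (g c - g v)"
    with diameter_config_middle_neighbour[OF cfg in_W(1,3,2,4) _ _ _ _ edges(2,1,3)] distinct
    show ?thesis by blast
  next
    assume "in_cone (g a - g v) (g b - g v) (g c - g v)"
    with diameter_config_middle_neighbour[OF cfg in_W(1,2,3,4) _ _ _ _ edges(1,2,3)] distinct
    show ?thesis by blast
  next
    assume "in_cone (g c - g v) (g a - g v) (g b - g v)"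
    with diameter_config_middle_neighbour[OF cfg in_W(1,4,2,3) _ _ _ _ edges(3,1,2)] distinct
    show ?thesis by blast
  qed
qed

section \<open>The Hopf--Pannwitz bound\<close>

lemma sum_card_incident_eq_twice_card:
  assumes "finite S" and two_sets: "\<And>e. e \<in> F \<Longrightarrow> card e = 2 \<and> e \<subseteq> S"
  shows "(\<Sum>x\<in>S. card {e\<in>F. x \<in> e}) = 2 * card F"
proof -
  have "F \<subseteq> Pow S" using two_sets by auto
  hence "finite F" using \<open>finite S\<close> by (simp add: finite_subset)
  have "(\<Sum>x\<in>S. card {e\<in>F. x \<in> e}) = (\<Sum>x\<in>S. \<Sum>e\<in>F. if x \<in> e then 1 else 0)"
    using sum.inter_filter[OF \<open>finite F\<close>, of "\<lambda>_. 1::nat"] by simp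
  also have "\<dots> = (\<Sum>e\<in>F. \<Sum>x\<in>S. if x \<in> e then 1 else 0)" by (rule sum.swap)
  also have "\<dots> = (\<Sum>e\<in>F. card e)"
  proof (rule sum.cong)
    fix e assume "e \<in> F"
    with two_sets have "e \<subseteq> S" by blast
    with \<open>finite S\<close> show "(\<Sum>x\<in>S. if x \<in> e then 1 else 0) = card e"
      by (simp add: sum.If_cases inf.absorb2)
  qed simp
  also have "\<dots> = 2 * card F" using two_sets by simp
  finally show ?thesis .
qed

lemma card_incident_edges_eq_card_neighbours:
  assumes "\<forall>e\<in>Ed. card e = 2" "x \<in> S"
  shows "card {e\<in>Ed. e \<subseteq> S \<and> x \<in> e} = card {y\<in>S. adj Ed x y}"
proof -
  have "{e\<in>Ed. e \<subseteq> S \<and> x \<in> e} = (\<lambda>y. {x, y}) ` {y\<in>S. adj Ed x y}"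
  proof (intro equalityI subsetI)
    fix e assume e: "e \<in> {e\<in>Ed. e \<subseteq> S \<and> x \<in> e}"
    with assms(1) obtain a b where "e = {a, b}" "a \<noteq> b" by (auto simp: card_2_iff)
    with e obtain y where "e = {x, y}" "y \<noteq> x" by (metis insert_commute insertE singletonD mem_Collect_eq)
    with e show "e \<in> (\<lambda>y. {x, y}) ` {y\<in>S. adj Ed x y}" by (auto simp: adj_def)
  qed (use assms(2) in \<open>auto simp: adj_def\<close>)
  moreover have "inj_on (\<lambda>y. {x, y}) {y\<in>S. adj Ed x y}"
    by (rule inj_onI) (auto simp: adj_def doubleton_eq_iff)
  ultimately show ?thesis by (metis card_image)
qed

lemma diameter_config_degree_le_2:
  assumes cfg: "diameter_config W (adj Ed) g D" and "S \<subseteq> W" "x \<in> S"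
    and min_deg: "\<forall>y\<in>S. 2 \<le> card {z\<in>S. adj Ed y z}"
  shows "card {y\<in>S. adj Ed x y} \<le> 2"
proof (rule ccontr)
  assume "\<not> card {y\<in>S. adj Ed x y} \<le> 2"
  hence "3 \<le> card {y\<in>S. adj Ed x y}" by simp
  then obtain T where "T \<subseteq> {y\<in>S. adj Ed x y}" "card T = 3" by (rule obtain_subset_with_card_n)
  then obtain a b c where abc: "{a, b, c} \<subseteq> {y\<in>S. adj Ed x y}" "a \<noteq> b" "b \<noteq> c" "a \<noteq> c"
    by (auto simp: card_3_iff)
  hence "x \<notin> {a, b, c}" "{a, b, c} \<subseteq> S" by (auto simp: adj_def)
  then obtain z where z: "z \<in> {a, b, c}" "\<forall>w\<in>W. w \<noteq> z \<longrightarrow> adj Ed z w \<longrightarrow> w = x"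
    using diameter_config_three_neighbours[OF cfg, of x a b c] abc assms(2,3) by auto
  hence "{y\<in>S. adj Ed z y} \<subseteq> {x}" using assms(2) by (auto simp: adj_def)
  hence "card {y\<in>S. adj Ed z y} \<le> 1" using card_mono[of "{x}"] by fastforce
  with min_deg z(1) \<open>{a, b, c} \<subseteq> S\<close> show False by fastforce
qed

text \<open>Delete a vertex of degree at most 1 and induct; if there is none, all degrees are 2 and
  double counting gives equality.\<close>
lemma diameter_config_card_edges_le:
  assumes cfg: "diameter_config W (adj Ed) g D" and two: "\<forall>e\<in>Ed. card e = 2"
    and "finite S" "S \<subseteq> W"
  shows "card {e\<in>Ed. e \<subseteq> S} \<le> card S"
  using assms(3,4)
proof (induction "card S" arbitrary: S rule: less_induct)
  case less
  define N where "N x = {y\<in>S. adj Ed x y}" for x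
  have deg: "card {e\<in>Ed. e \<subseteq> S \<and> x \<in> e} = card (N x)" if "x \<in> S" for x
    unfolding N_def using card_incident_edges_eq_card_neighbours[OF two that] .
  show ?case
  proof (cases "\<exists>x\<in>S. card (N x) \<le> 1")
    case True
    then obtain x where x: "x \<in> S" "card (N x) \<le> 1" by blast
    have "{e\<in>Ed. e \<subseteq> S} = {e\<in>Ed. e \<subseteq> S - {x}} \<union> {e\<in>Ed. e \<subseteq> S \<and> x \<in> e}" by auto
    hence "card {e\<in>Ed. e \<subseteq> S} \<le> card {e\<in>Ed. e \<subseteq> S - {x}} + card {e\<in>Ed. e \<subseteq> S \<and> x \<in> e}"
      by (simp add: card_Un_le)
    also have "card {e\<in>Ed. e \<subseteq> S \<and> x \<in> e} = card (N x)" by (rule deg[OF x(1)])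
    also have "card {e\<in>Ed. e \<subseteq> S - {x}} \<le> card (S - {x})"
    proof (rule less.hyps)
      show "card (S - {x}) < card S" using less.prems(1) x(1) by (rule card_Diff1_less)
    qed (use less.prems in auto)
    finally show ?thesis using x(2) card_Suc_Diff1[OF less.prems(1) x(1)] by linarith
  next
    case False
    have "\<forall>y\<in>S. 2 \<le> card {z\<in>S. adj Ed y z}"
    proof
      fix y assume "y \<in> S"
      with False have "\<not> card (N y) \<le> 1" by blast
      thus "2 \<le> card {z\<in>S. adj Ed y z}" unfolding N_def by simp
    qed
    hence "card (N x) \<le> 2" if "x \<in> S" for x
      unfolding N_def using diameter_config_degree_le_2[OF cfg less.prems(2) that] by blast
    hence "(\<Sum>x\<in>S. card (N x)) \<le> (\<Sum>x\<in>S. 2)" by (rule sum_mono)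
    moreover have "(\<Sum>x\<in>S. card (N x)) = (\<Sum>x\<in>S. card {e\<in>{e\<in>Ed. e \<subseteq> S}. x \<in> e})"
    proof (rule sum.cong)
      fix x assume "x \<in> S"
      have "{e\<in>{e\<in>Ed. e \<subseteq> S}. x \<in> e} = {e\<in>Ed. e \<subseteq> S \<and> x \<in> e}" by blast
      with deg[OF \<open>x \<in> S\<close>] show "card (N x) = card {e\<in>{e\<in>Ed. e \<subseteq> S}. x \<in> e}" by simp
    qed simp
    also have "\<dots> = 2 * card {e\<in>Ed. e \<subseteq> S}"
      using two by (intro sum_card_incident_eq_twice_card less.prems(1)) auto
    ultimately show ?thesis by simp
  qed
qed

lemma euclid_dist_2_eq_dist: "euclid_dist 2 x y = dist (x 0, x 1) (y 0, y 1)"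
  by (simp add: euclid_dist_def numeral_2_eq_2 dist_Pair_Pair dist_real_def)

lemma diameter_graph_imp_diameter_config:
  assumes "is_diameter_graph 2 W E" "finite W"
  shows "\<exists>g D. diameter_config W E g D"
proof -
  obtain f where f: "\<forall>v\<in>W. point_in_R 2 (f v)" "inj_on f W"
    "\<forall>x\<in>W. \<forall>y\<in>W. x \<noteq> y \<longrightarrow> (E x y \<longleftrightarrow> euclid_dist 2 (f x) (f y) = diam_R 2 (f ` W))"
    using assms(1) unfolding is_diameter_graph_def by blast
  define g where "g v = (f v 0, f v 1)" for v
  have "inj_on g W"
  proof (rule inj_onI)
    fix x y assume "x \<in> W" "y \<in> W" "g x = g y"
    hence "f x i = f y i" for i
      using f(1) by (cases "i < 2") (auto simp: g_def point_in_R_def less_2_cases_iff)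
    thus "x = y" using inj_onD[OF f(2) _ \<open>x \<in> W\<close> \<open>y \<in> W\<close>] by auto
  qed
  moreover have "dist (g x) (g y) \<le> diam_R 2 (f ` W)" if "x \<in> W" "y \<in> W" for x y
  proof -
    have "{euclid_dist 2 a b |a b. a \<in> f ` W \<and> b \<in> f ` W} =
          (\<lambda>(a, b). euclid_dist 2 a b) ` (f ` W \<times> f ` W)" by auto
    hence "finite {euclid_dist 2 a b |a b. a \<in> f ` W \<and> b \<in> f ` W}" using assms(2) by simp
    thus ?thesis unfolding diam_R_def g_def euclid_dist_2_eq_dist[symmetric]
      by (rule Max_ge) (use that in blast)
  qed
  ultimately have "diameter_config W E g (diam_R 2 (f ` W))"
    using f(3) unfolding diameter_config_def g_def euclid_dist_2_eq_dist by blast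
  thus ?thesis by blast
qed

lemma good_set_imp_sparse_subset:
  assumes "good_set 2 conn Ed W" "Ed \<subseteq> all_edges n" "W \<subseteq> {..<n}" "k \<le> card W"
  shows "\<exists>S\<subseteq>{..<n}. card S = k \<and> card {e\<in>Ed. e \<subseteq> S} \<le> k"
proof -
  have "finite W" using assms(3) finite_subset by blast
  with assms(1) obtain g D where "diameter_config W (adj Ed) g D"
    using diameter_graph_imp_diameter_config unfolding good_set_def by blast
  moreover have "\<forall>e\<in>Ed. card e = 2" using assms(2) unfolding all_edges_def by auto
  moreover obtain S where "S \<subseteq> W" "card S = k" using assms(4) by (rule obtain_subset_with_card_n)
  ultimately show ?thesis
    using diameter_config_card_edges_le[of W Ed g D S] \<open>finite W\<close> finite_subset assms(3)
    by (metis subset_trans)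
qed

section \<open>Sparse sets in \<open>G(n,p)\<close>\<close>

definition gnp_weight :: "nat \<Rightarrow> real \<Rightarrow> nat set set \<Rightarrow> real" where
  "gnp_weight n p Ed = p ^ card Ed * (1 - p) ^ (card (all_edges n) - card Ed)"

lemma prob_Gnp_eq_sum_weight:
  "prob_Gnp n p Q = (\<Sum>Ed\<in>Pow (all_edges n). if Q Ed then gnp_weight n p Ed else 0)"
  unfolding prob_Gnp_def gnp_weight_def ..

lemma gnp_weight_nonneg: "0 \<le> p \<Longrightarrow> p \<le> 1 \<Longrightarrow> 0 \<le> gnp_weight n p Ed"
  unfolding gnp_weight_def by simp

lemma finite_all_edges: "finite (all_edges n)"
  unfolding all_edges_def by (rule finite_subset[of _ "Pow {..<n}"]) auto

lemma prob_Gnp_mono: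
  assumes "0 \<le> p" "p \<le> 1" "\<And>Ed. Ed \<subseteq> all_edges n \<Longrightarrow> Q Ed \<Longrightarrow> R Ed"
  shows "prob_Gnp n p Q \<le> prob_Gnp n p R"
  unfolding prob_Gnp_eq_sum_weight by (rule sum_mono) (use assms gnp_weight_nonneg in auto)

lemma prob_Gnp_union_bound:
  assumes p: "0 \<le> p" "p \<le> 1" and "finite I"
    and cover: "\<And>Ed. Ed \<subseteq> all_edges n \<Longrightarrow> Q Ed \<Longrightarrow> \<exists>i\<in>I. R i Ed"
  shows "prob_Gnp n p Q \<le> (\<Sum>i\<in>I. prob_Gnp n p (R i))"
proof -
  have "prob_Gnp n p Q \<le> (\<Sum>Ed\<in>Pow (all_edges n). \<Sum>i\<in>I. if R i Ed then gnp_weight n p Ed else 0)"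
    unfolding prob_Gnp_eq_sum_weight
  proof (rule sum_mono)
    fix Ed assume "Ed \<in> Pow (all_edges n)"
    show "(if Q Ed then gnp_weight n p Ed else 0) \<le> (\<Sum>i\<in>I. if R i Ed then gnp_weight n p Ed else 0)"
    proof (cases "Q Ed")
      case True
      with cover \<open>Ed \<in> Pow (all_edges n)\<close> obtain i where "i \<in> I" "R i Ed" by blast
      with True show ?thesis
        using member_le_sum[of i I "\<lambda>i. if R i Ed then gnp_weight n p Ed else 0"]
          \<open>finite I\<close> gnp_weight_nonneg[OF p] by simp
    qed (simp add: sum_nonneg gnp_weight_nonneg[OF p])
  qed
  also have "\<dots> = (\<Sum>i\<in>I. prob_Gnp n p (R i))"
    unfolding prob_Gnp_eq_sum_weight by (rule sum.swap)
  finally show ?thesis .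
qed

lemma sum_power_card_Int_weight:
  assumes "B \<subseteq> all_edges n"
  shows "(\<Sum>Ed\<in>Pow (all_edges n). t ^ card (Ed \<inter> B) * gnp_weight n p Ed) = (p * t + (1 - p)) ^ card B"
proof -
  let ?A = "all_edges n"
  have pow_card: "(\<Prod>x\<in>X. if x \<in> B then s else 1) = s ^ card (X \<inter> B)" if "finite X" for X and s :: real
    using that by (simp add: prod.If_cases Int_def)
  have "(p * t + (1 - p)) ^ card B = (\<Prod>x\<in>?A. if x \<in> B then p * t + (1 - p) else 1)"
    using pow_card[OF finite_all_edges] assms by (simp add: Int_absorb1)
  also have "\<dots> = (\<Prod>x\<in>?A. p * (if x \<in> B then t else 1) + (1 - p))"
    by (rule prod.cong) auto
  also have "\<dots> = (\<Sum>X\<in>Pow ?A. (\<Prod>x\<in>X. p * (if x \<in> B then t else 1)) * (\<Prod>x\<in>?A - X. 1 - p))"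
    by (rule prod_add[OF finite_all_edges])
  also have "\<dots> = (\<Sum>Ed\<in>Pow ?A. t ^ card (Ed \<inter> B) * gnp_weight n p Ed)"
  proof (rule sum.cong)
    fix X assume "X \<in> Pow ?A"
    hence "finite X" "X \<subseteq> ?A" using finite_all_edges finite_subset by auto
    thus "(\<Prod>x\<in>X. p * (if x \<in> B then t else 1)) * (\<Prod>x\<in>?A - X. 1 - p) = t ^ card (X \<inter> B) * gnp_weight n p X"
      by (simp add: gnp_weight_def prod.distrib pow_card card_Diff_subset)
  qed simp
  finally show ?thesis ..
qed

text \<open>Markov's inequality applied to \<open>t ^ card (Ed \<inter> B)\<close>.\<close>
lemma prob_Gnp_card_Int_le:
  assumes B: "B \<subseteq> all_edges n" and p: "0 \<le> p" "p \<le> 1" and t: "0 < t" "t \<le> 1"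
  shows "prob_Gnp n p (\<lambda>Ed. card (Ed \<inter> B) \<le> m) \<le> (p * t + (1 - p)) ^ card B / t ^ m"
proof -
  have "prob_Gnp n p (\<lambda>Ed. card (Ed \<inter> B) \<le> m)
        \<le> (\<Sum>Ed\<in>Pow (all_edges n). t ^ card (Ed \<inter> B) * gnp_weight n p Ed / t ^ m)"
    unfolding prob_Gnp_eq_sum_weight
  proof (rule sum_mono)
    fix Ed
    show "(if card (Ed \<inter> B) \<le> m then gnp_weight n p Ed else 0)
          \<le> t ^ card (Ed \<inter> B) * gnp_weight n p Ed / t ^ m"
    proof (cases "card (Ed \<inter> B) \<le> m")
      case True
      hence "1 \<le> t ^ card (Ed \<inter> B) / t ^ m" using t power_decreasing[OF True, of t] by simp
      from mult_left_mono[OF this gnp_weight_nonneg[OF p, of n Ed]] True show ?thesis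
        by (simp add: mult.commute)
    qed (use t gnp_weight_nonneg[OF p] in simp)
  qed
  also have "\<dots> = (p * t + (1 - p)) ^ card B / t ^ m"
    by (simp add: sum_divide_distrib[symmetric] sum_power_card_Int_weight[OF B])
  finally show ?thesis .
qed

lemma prob_Gnp_exists_sparse_subset_le:
  assumes p: "0 \<le> p" "p \<le> 1" and t: "0 < t" "t \<le> 1"
  shows "prob_Gnp n p (\<lambda>Ed. \<exists>S\<subseteq>{..<n}. card S = k \<and> card {e\<in>Ed. e \<subseteq> S} \<le> m)
          \<le> real (n choose k) * ((p * t + (1 - p)) ^ (k choose 2) / t ^ m)"
proof -
  define I where "I = {S. S \<subseteq> {..<n} \<and> card S = k}"
  have "finite I" unfolding I_def by (rule finite_subset[of _ "Pow {..<n}"]) auto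
  have card_I: "card I = n choose k" unfolding I_def using n_subsets[of "{..<n}" k] by simp
  have "prob_Gnp n p (\<lambda>Ed. \<exists>S\<subseteq>{..<n}. card S = k \<and> card {e\<in>Ed. e \<subseteq> S} \<le> m)
        \<le> (\<Sum>S\<in>I. prob_Gnp n p (\<lambda>Ed. card {e\<in>Ed. e \<subseteq> S} \<le> m))"
    by (rule prob_Gnp_union_bound[OF p \<open>finite I\<close>]) (auto simp: I_def)
  also have "\<dots> \<le> (\<Sum>S\<in>I. (p * t + (1 - p)) ^ (k choose 2) / t ^ m)"
  proof (rule sum_mono)
    fix S assume S: "S \<in> I"
    define B where "B = {e\<in>all_edges n. e \<subseteq> S}"
    have "B = {e. e \<subseteq> S \<and> card e = 2}" using S unfolding B_def I_def all_edges_def by auto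
    hence "card B = k choose 2"
      using n_subsets[of S 2] S finite_subset[of S "{..<n}"] unfolding I_def by simp
    moreover have "prob_Gnp n p (\<lambda>Ed. card {e\<in>Ed. e \<subseteq> S} \<le> m) \<le> prob_Gnp n p (\<lambda>Ed. card (Ed \<inter> B) \<le> m)"
    proof (rule prob_Gnp_mono[OF p])
      fix Ed assume "Ed \<subseteq> all_edges n" "card {e\<in>Ed. e \<subseteq> S} \<le> m"
      moreover have "{e\<in>Ed. e \<subseteq> S} = Ed \<inter> B" using \<open>Ed \<subseteq> all_edges n\<close> unfolding B_def by auto
      ultimately show "card (Ed \<inter> B) \<le> m" by simp
    qed
    moreover have "prob_Gnp n p (\<lambda>Ed. card (Ed \<inter> B) \<le> m) \<le> (p * t + (1 - p)) ^ card B / t ^ m"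
      by (rule prob_Gnp_card_Int_le[OF _ p t]) (simp add: B_def)
    ultimately show "prob_Gnp n p (\<lambda>Ed. card {e\<in>Ed. e \<subseteq> S} \<le> m) \<le> (p * t + (1 - p)) ^ (k choose 2) / t ^ m"
      by simp
  qed
  also have "\<dots> = real (n choose k) * ((p * t + (1 - p)) ^ (k choose 2) / t ^ m)"
    using card_I by simp
  finally show ?thesis .
qed

lemma power_le_exp_mult_fact:
  fixes x :: real
  assumes "0 \<le> x"
  shows "x ^ k \<le> exp x * fact k"
proof -
  have exp_sums: "(\<lambda>n. x ^ n / fact n) sums exp x"
    using exp_converges[of x] by (simp add: divide_inverse mult.commute)
  have "x ^ k / fact k \<le> (\<Sum>n. x ^ n / fact n)"
    using sum_le_suminf[of "\<lambda>n. x ^ n / fact n" "{k}"] exp_sums assms by (auto simp: sums_iff)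
  thus ?thesis using exp_sums by (simp add: sums_iff divide_le_eq mult.commute)
qed

lemma ln_binomial_le:
  assumes "0 < k" "k \<le> n"
  shows "ln (real (n choose k)) \<le> real k * (ln (real n) - ln (real k) + 1)"
proof -
  have "0 < real (n choose k)" "0 < real n" using assms by auto
  have "real (n choose k) * fact k \<le> real n ^ k"
    using binomial_fact_pow[of n k] by (metis of_nat_fact of_nat_le_iff of_nat_mult of_nat_power)
  hence "ln (real (n choose k)) + ln (fact k) \<le> real k * ln (real n)"
    using \<open>0 < real (n choose k)\<close> \<open>0 < real n\<close>
      ln_le_cancel_iff[of "real (n choose k) * fact k" "real n ^ k"]
    by (simp add: ln_mult ln_realpow)
  moreover have "real k ^ k \<le> exp (real k) * fact k" by (rule power_le_exp_mult_fact) simp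
  hence "real k * ln (real k) \<le> real k + ln (fact k)"
    using assms(1) ln_le_cancel_iff[of "real k ^ k" "exp (real k) * fact k"] by (simp add: ln_mult ln_realpow)
  ultimately show ?thesis by (simp add: algebra_simps)
qed

lemma of_nat_choose_two: "real (k choose 2) = real k * (real k - 1) / 2"
  by (induction k) (simp_all add: numeral_2_eq_2 field_simps)

lemma ln_moment_base_le:
  fixes p t :: real and k :: nat
  assumes p: "0 < p" "p < 1" and "1 < k" and t: "t = 2 * (1 - p) / ((real k - 1) * p)"
  shows "ln (p * t + (1 - p)) \<le> ln (1 - p) + 2 / (real k - 1)"
proof -
  have "0 < real k - 1" using \<open>1 < k\<close> by simp
  hence "p * t + (1 - p) = (1 - p) * (1 + 2 / (real k - 1))"
    unfolding t using p by (simp add: field_simps)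
  moreover have "0 < 1 + 2 / (real k - 1)" using \<open>0 < real k - 1\<close> by (simp add: add_pos_pos)
  ultimately show ?thesis
    using p ln_add_one_self_le_self[of "2 / (real k - 1)"] \<open>0 < real k - 1\<close> by (simp add: ln_mult)
qed

text \<open>The logarithm of the union bound is at most
  \<open>k (ln (n p) + 2 - ln 2 - (k - 3)/2 \<cdot> ln (1/q))\<close>.\<close>
lemma union_bound_le_half:
  fixes n k :: nat and p t :: real
  assumes p: "0 < p" "p < 1" and k: "3 \<le> k"
    and t: "t = 2 * (1 - p) / ((real k - 1) * p)"
    and H: "ln (real n * p) + 2 - (real k - 3) / 2 * ln (1 / (1 - p)) \<le> -1"
  shows "real (n choose k) * ((p * t + (1 - p)) ^ (k choose 2) / t ^ k) \<le> 1/2"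
proof (cases "k \<le> n")
  case False
  thus ?thesis by (simp add: binomial_eq_0)
next
  case True
  define q where "q = 1 - p"
  have "q > 0" "real k - 1 > 0" "real n > 0" using p k True by (auto simp: q_def)
  have "t > 0" using t \<open>q > 0\<close> \<open>real k - 1 > 0\<close> p by (simp add: q_def)
  define C where "C = real (n choose k)"
  have "C > 0" unfolding C_def using True by simp
  define N where "N = real (k choose 2)"
  have N: "N = real k * (real k - 1) / 2" unfolding N_def by (rule of_nat_choose_two)
  define A where "A = p * t + q"
  have "A > 0" unfolding A_def using \<open>t > 0\<close> \<open>q > 0\<close> p by (simp add: add_pos_pos)
  define X where "X = C * (A ^ (k choose 2) / t ^ k)"
  have "X > 0" unfolding X_def using \<open>C > 0\<close> \<open>A > 0\<close> \<open>t > 0\<close> by simp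
  have ln_X: "ln X = ln C + N * ln A - real k * ln t"
    unfolding X_def N_def using \<open>C > 0\<close> \<open>A > 0\<close> \<open>t > 0\<close> by (simp add: ln_mult ln_div ln_realpow)
  have ln_C: "ln C \<le> real k * ln (real n) - real k * ln (real k) + real k"
    unfolding C_def using ln_binomial_le[OF _ True] k by (simp add: algebra_simps)
  have "ln A \<le> ln q + 2 / (real k - 1)"
    using ln_moment_base_le[OF p _ t] k unfolding A_def q_def by simp
  hence "N * ln A \<le> N * (ln q + 2 / (real k - 1))" by (rule mult_left_mono) (simp add: N_def)
  also have "\<dots> = N * ln q + real k" unfolding N using \<open>real k - 1 > 0\<close> by (simp add: field_simps)
  finally have ln_A: "N * ln A \<le> N * ln q + real k" .
  have "ln t = ln 2 + ln q - ln (real k - 1) - ln p"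
    unfolding t q_def[symmetric] using \<open>q > 0\<close> \<open>real k - 1 > 0\<close> p by (simp add: ln_mult ln_div)
  moreover have "ln (real k - 1) \<le> ln (real k)" using \<open>real k - 1 > 0\<close> by simp
  ultimately have "- ln t \<le> ln (real k) + ln p - ln 2 - ln q" by linarith
  hence ln_t: "- (real k * ln t) \<le> real k * (ln (real k) + ln p - ln 2 - ln q)"
    using mult_left_mono[of "- ln t" _ "real k"] by simp
  have "ln X \<le> real k * ln (real n) - real k * ln (real k) + real k + N * ln q + real k
               + real k * (ln (real k) + ln p - ln 2 - ln q)"
    using ln_X ln_C ln_A ln_t by linarith
  also have "\<dots> = real k * (ln (real n * p) + 2 - ln 2 - (real k - 3) / 2 * ln (1 / q))"
    unfolding N using \<open>real n > 0\<close> p \<open>q > 0\<close>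
    by (simp add: ln_mult ln_div algebra_simps add_divide_distrib[symmetric])
  also have "\<dots> \<le> real k * (-1)"
  proof (rule mult_left_mono)
    have "0 \<le> ln (2::real)" by simp
    thus "ln (real n * p) + 2 - ln 2 - (real k - 3) / 2 * ln (1 / q) \<le> -1"
      using H unfolding q_def by linarith
  qed simp
  also have "\<dots> \<le> -1" using k by simp
  finally have "X \<le> exp (-1)" using \<open>X > 0\<close> by (metis exp_ln exp_le_cancel_iff)
  also have "exp (-1 :: real) \<le> 1/2"
    using exp_ge_add_one_self[of 1] by (simp add: exp_minus field_simps)
  finally show ?thesis unfolding X_def C_def A_def q_def .
qed

lemma prob_Gnp_sparse_subset_le_half:
  fixes n k :: nat and p :: real
  assumes p: "0 < p" "p < 1" and k: "3 \<le> k" and small_t: "2 * (1 - p) \<le> (real k - 1) * p"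
    and H: "ln (real n * p) + 2 - (real k - 3) / 2 * ln (1 / (1 - p)) \<le> -1"
  shows "prob_Gnp n p (\<lambda>Ed. \<exists>S\<subseteq>{..<n}. card S = k \<and> card {e\<in>Ed. e \<subseteq> S} \<le> k) \<le> 1/2"
proof -
  define t where "t = 2 * (1 - p) / ((real k - 1) * p)"
  have "0 < t" "t \<le> 1" using p k small_t by (auto simp: t_def)
  have "prob_Gnp n p (\<lambda>Ed. \<exists>S\<subseteq>{..<n}. card S = k \<and> card {e\<in>Ed. e \<subseteq> S} \<le> k)
        \<le> real (n choose k) * ((p * t + (1 - p)) ^ (k choose 2) / t ^ k)"
    by (rule prob_Gnp_exists_sparse_subset_le) (use p \<open>0 < t\<close> \<open>t \<le> 1\<close> in auto)
  also have "\<dots> \<le> 1/2" by (rule union_bound_le_half[OF p k t_def H])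
  finally show ?thesis .
qed

section \<open>The upper bound\<close>

lemma u_gen_less_if_sparse_subset_unlikely:
  assumes p: "0 \<le> p" "p \<le> 1" and "0 < k"
    and sparse: "prob_Gnp n p (\<lambda>Ed. \<exists>S\<subseteq>{..<n}. card S = k \<and> card {e\<in>Ed. e \<subseteq> S} \<le> k) \<le> 1/2"
  shows "u_gen 2 conn n p < k"
proof -
  define P where "P k' \<longleftrightarrow> 0 < k' \<and>
    1/2 < prob_Gnp n p (\<lambda>Ed. \<exists>W\<subseteq>{..<n}. card W = k' \<and> good_set 2 conn Ed W)" for k'
  have P_less: "k' < k" if "P k'" for k'
  proof (rule ccontr)
    assume "\<not> k' < k"
    have "prob_Gnp n p (\<lambda>Ed. \<exists>W\<subseteq>{..<n}. card W = k' \<and> good_set 2 conn Ed W)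
          \<le> prob_Gnp n p (\<lambda>Ed. \<exists>S\<subseteq>{..<n}. card S = k \<and> card {e\<in>Ed. e \<subseteq> S} \<le> k)"
    proof (rule prob_Gnp_mono[OF p])
      fix Ed assume "Ed \<subseteq> all_edges n" "\<exists>W\<subseteq>{..<n}. card W = k' \<and> good_set 2 conn Ed W"
      then obtain W where "W \<subseteq> {..<n}" "card W = k'" "good_set 2 conn Ed W" by blast
      with \<open>\<not> k' < k\<close> \<open>Ed \<subseteq> all_edges n\<close>
      show "\<exists>S\<subseteq>{..<n}. card S = k \<and> card {e\<in>Ed. e \<subseteq> S} \<le> k"
        using good_set_imp_sparse_subset[of conn Ed W n k] by simp
    qed
    with that sparse show False unfolding P_def by simp
  qed
  show ?thesis
  proof (cases "\<exists>k'. P k'")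
    case True
    then obtain k' where "P k'" by blast
    have "P (Greatest P)"
      by (rule GreatestI_nat[of P k' k, OF \<open>P k'\<close>]) (use P_less in \<open>auto simp: less_imp_le\<close>)
    moreover have "u_gen 2 conn n p = Greatest P"
    proof -
      have "\<exists>k>0. 1/2 < prob_Gnp n p (\<lambda>Ed. \<exists>W\<subseteq>{..<n}. card W = k \<and> good_set 2 conn Ed W)"
        using \<open>P k'\<close> unfolding P_def by blast
      thus ?thesis unfolding u_gen_def P_def by simp
    qed
    ultimately show ?thesis using P_less by simp
  next
    case False
    hence "\<not> (\<exists>k>0. 1/2 < prob_Gnp n p (\<lambda>Ed. \<exists>W\<subseteq>{..<n}. card W = k \<and> good_set 2 conn Ed W))"
      unfolding P_def by blast
    hence "u_gen 2 conn n p = 0" unfolding u_gen_def by (rule if_not_P)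
    with \<open>0 < k\<close> show ?thesis by simp
  qed
qed

lemma ln_inverse_le_ln_np:
  fixes n :: nat and p d :: real
  assumes "0 < p" "0 < d"
    and q_ln: "1 \<le> (1 - p) * ln (real n)" and np: "12 / d \<le> ln (real n * p)"
    and lnln: "ln (ln (real n)) \<le> d / 3 * (ln (real n) - ln 2)"
  shows "ln (1 / (1 - p)) \<le> d / 3 * ln (real n * p)"
proof (cases "p \<le> 1/2")
  case True
  hence "1 / (1 - p) \<le> 2" by (simp add: divide_le_eq)
  hence "ln (1 / (1 - p)) \<le> ln 2" using True by simp
  also have "\<dots> \<le> 1" using ln_le_minus_one[of 2] by simp
  also have "\<dots> \<le> d / 3 * ln (real n * p)"
    using mult_left_mono[OF np, of "d/3"] \<open>0 < d\<close> by simp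
  finally show ?thesis .
next
  case False
  have "0 < (1 - p) * ln (real n)" using q_ln by simp
  moreover have "0 \<le> ln (real n)" by (cases n) auto
  ultimately have "0 < 1 - p" "0 < ln (real n)" by (auto simp: zero_less_mult_iff)
  have "1 / (1 - p) \<le> ln (real n)"
    using q_ln \<open>0 < 1 - p\<close> by (simp add: divide_le_eq mult.commute)
  hence "ln (1 / (1 - p)) \<le> ln (ln (real n))" by (subst ln_le_cancel_iff) (use \<open>0 < 1 - p\<close> \<open>0 < ln (real n)\<close> in auto)
  also have "\<dots> \<le> d / 3 * (ln (real n) - ln 2)" by (rule lnln)
  also have "\<dots> \<le> d / 3 * ln (real n * p)"
  proof -
    have "0 < real n" using \<open>0 < ln (real n)\<close> by (cases n) auto
    moreover have "ln (1 / 2) \<le> ln p" using False \<open>0 < p\<close> by simp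
    ultimately have "ln (real n) - ln 2 \<le> ln (real n * p)"
      using \<open>0 < p\<close> by (simp add: ln_mult ln_div)
    thus ?thesis using \<open>0 < d\<close> by simp
  qed
  finally show ?thesis .
qed

lemma chernoff_parameter_le_one:
  fixes p L :: real and k :: nat
  assumes p: "0 < p" "p < 1" and LQ: "3 \<le> L * ln (1 / (1 - p))"
    and k: "2 * L \<le> real k" "24 \<le> real k"
  shows "2 * (1 - p) \<le> (real k - 1) * p"
proof -
  have "0 < 1 - p" using p by simp
  have Q_le: "ln (1 / (1 - p)) \<le> p / (1 - p)"
    using ln_le_minus_one[of "1 / (1 - p)"] \<open>0 < 1 - p\<close> by (simp add: field_simps)
  have "0 \<le> ln (1 / (1 - p))" using p by simp
  have "0 \<le> L"
  proof (rule ccontr)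
    assume "\<not> 0 \<le> L"
    with \<open>0 \<le> ln (1 / (1 - p))\<close> have "L * ln (1 / (1 - p)) \<le> 0" by (simp add: mult_nonpos_nonneg)
    with LQ show False by simp
  qed
  hence "3 \<le> L * (p / (1 - p))" using LQ mult_left_mono[OF Q_le \<open>0 \<le> L\<close>] by linarith
  hence "3 * (1 - p) \<le> L * p" using \<open>0 < 1 - p\<close> by (simp add: field_simps)
  hence "6 * (1 - p) \<le> real k * p" using k(1) mult_right_mono[OF k(1), of p] p by linarith
  moreover have "24 * p \<le> real k * p" using mult_right_mono[OF k(2), of p] p by simp
  ultimately show ?thesis by (simp add: algebra_simps)
qed

lemma prob_Gnp_sparse_threshold_le_half:
  fixes n k :: nat and p d :: real
  assumes p: "0 < p" "p < 1" and d: "0 < d" "d \<le> 1/4"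
    and Q_X: "ln (1 / (1 - p)) \<le> d / 3 * ln (real n * p)" and ln_X: "12 / d \<le> ln (real n * p)"
    and k: "(2 + 2 * d) * log (1 / (1 - p)) (real n * p) \<le> real k"
  shows "prob_Gnp n p (\<lambda>Ed. \<exists>S\<subseteq>{..<n}. card S = k \<and> card {e\<in>Ed. e \<subseteq> S} \<le> k) \<le> 1/2"
proof -
  define X Q where "X = real n * p" and "Q = ln (1 / (1 - p))"
  define L where "L = ln X / Q"
  have "0 < Q" unfolding Q_def using p by simp
  have LQ: "L * Q = ln X" unfolding L_def using \<open>0 < Q\<close> by simp
  have k_ge: "(2 + 2 * d) * L \<le> real k" using k unfolding L_def X_def Q_def log_def .
  have "3 / d \<le> L" unfolding L_def using Q_X \<open>0 < Q\<close> d(1) by (simp add: field_simps X_def Q_def)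
  moreover have "12 \<le> 3 / d" using d by (simp add: field_simps)
  ultimately have "12 \<le> L" by linarith
  have "0 \<le> 2 * d * L" "(2 + 2 * d) * L = 2 * L + 2 * d * L"
    using d \<open>12 \<le> L\<close> by (simp_all add: algebra_simps)
  hence "24 \<le> real k" "2 * L \<le> real k" using k_ge \<open>12 \<le> L\<close> by linarith+
  have "3 \<le> 12 / d" using d by (simp add: field_simps)
  hence "3 \<le> L * Q" using LQ ln_X unfolding X_def by linarith
  hence small_t: "2 * (1 - p) \<le> (real k - 1) * p"
    unfolding Q_def by (rule chernoff_parameter_le_one[OF p _ \<open>2 * L \<le> real k\<close> \<open>24 \<le> real k\<close>])
  have "((2 + 2 * d) * L - 3) / 2 * Q \<le> (real k - 3) / 2 * Q"
    using k_ge \<open>0 < Q\<close> by (intro mult_right_mono divide_right_mono) auto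
  moreover have "((2 + 2 * d) * L - 3) / 2 * Q = (1 + d) * (L * Q) - 3 / 2 * Q"
    by (simp add: field_simps)
  moreover have "12 \<le> d * ln X" using ln_X d by (simp add: field_simps X_def)
  ultimately have "ln X + 2 - (real k - 3) / 2 * Q \<le> -1"
    using Q_X unfolding LQ by (simp add: field_simps X_def Q_def)
  thus ?thesis
    using prob_Gnp_sparse_subset_le_half[OF p _ small_t] \<open>24 \<le> real k\<close> unfolding X_def Q_def by simp
qed

lemma u_gen_2_le_log:
  fixes p d c :: real and n :: nat
  assumes p: "0 \<le> p" "p \<le> 1" and d: "0 < d" "d \<le> 1/4" and c: "2 + 2 * d \<le> c"
    and q_ln: "1 \<le> (1 - p) * ln (real n)" and np: "exp (12 / d) \<le> real n * p"
    and lnln: "ln (ln (real n)) \<le> d / 3 * (ln (real n) - ln 2)"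
  shows "real (u_gen 2 conn n p) \<le> c * log (1 / (1 - p)) (real n * p)"
proof -
  have "0 < real n * p" using np exp_gt_zero[of "12 / d"] by linarith
  hence "0 < p" using p by (simp add: zero_less_mult_iff)
  have "p < 1" using q_ln p by (cases "p = 1") auto
  have ln_X: "12 / d \<le> ln (real n * p)"
    using np \<open>0 < real n * p\<close> by (metis ln_exp ln_le_cancel_iff exp_gt_zero)
  define L where "L = log (1 / (1 - p)) (real n * p)"
  have "0 < 12 / d" using d(1) by simp
  hence "0 < ln (real n * p)" using ln_X by linarith
  moreover have "0 < ln (1 / (1 - p))" using \<open>0 < p\<close> \<open>p < 1\<close> by simp
  ultimately have "0 < L" unfolding L_def log_def by (rule divide_pos_pos)
  define k where "k = nat \<lceil>(2 + 2 * d) * L\<rceil>"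
  have "real k = of_int \<lceil>(2 + 2 * d) * L\<rceil>" unfolding k_def using \<open>0 < L\<close> d by simp
  hence k: "(2 + 2 * d) * L \<le> real k" "real k < (2 + 2 * d) * L + 1" by linarith+
  have "0 < (2 + 2 * d) * L" using \<open>0 < L\<close> d by simp
  hence "0 < k" using k(1) by linarith
  moreover have "prob_Gnp n p (\<lambda>Ed. \<exists>S\<subseteq>{..<n}. card S = k \<and> card {e\<in>Ed. e \<subseteq> S} \<le> k) \<le> 1/2"
    using prob_Gnp_sparse_threshold_le_half[OF \<open>0 < p\<close> \<open>p < 1\<close> d _ ln_X] k(1)
      ln_inverse_le_ln_np[OF \<open>0 < p\<close> d(1) q_ln ln_X lnln] unfolding L_def by blast
  ultimately have "u_gen 2 conn n p < k" using u_gen_less_if_sparse_subset_unlikely[OF p] by blast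
  hence "real (u_gen 2 conn n p) \<le> (2 + 2 * d) * L" using k(2) by linarith
  also have "\<dots> \<le> c * L" using c \<open>0 < L\<close> by (simp add: mult_right_mono)
  finally show ?thesis unfolding L_def .
qed

theorem theorem16:
  fixes p :: "nat \<Rightarrow> real"
  assumes p_range: "\<And>n. 0 \<le> p n \<and> p n \<le> 1"
    and np_inf: "filterlim (\<lambda>n. real n * p n) at_top sequentially"
    and qln_inf: "filterlim (\<lambda>n. (1 - p n) * ln (real n)) at_top sequentially"
  shows "\<forall>\<epsilon>>0. \<exists>n0. \<forall>n\<ge>n0.
           real (u 2 n (p n)) \<le> (2 + \<epsilon>) * log (1 / (1 - p n)) (real n * p n) \<and>
           real (u' 2 n (p n)) \<le> (2 + \<epsilon>) * log (1 / (1 - p n)) (real n * p n)"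
proof (intro allI impI)
  fix \<epsilon> :: real assume "0 < \<epsilon>"
  define d where "d = min (\<epsilon> / 4) (1 / 4)"
  have d: "0 < d" "d \<le> 1/4" "2 + 2 * d \<le> 2 + \<epsilon>" using \<open>0 < \<epsilon>\<close> by (auto simp: d_def)
  have "eventually (\<lambda>n. 1 \<le> (1 - p n) * ln (real n)) sequentially"
    using qln_inf by (simp add: filterlim_at_top)
  moreover have "eventually (\<lambda>n. exp (12 / d) \<le> real n * p n) sequentially"
    using np_inf by (simp add: filterlim_at_top)
  moreover have "eventually (\<lambda>n. ln (ln (real n)) \<le> d / 3 * (ln (real n) - ln 2)) sequentially"
    using \<open>0 < d\<close> by real_asymp
  ultimately have "eventually (\<lambda>n. \<forall>conn. real (u_gen 2 conn n (p n))
                     \<le> (2 + \<epsilon>) * log (1 / (1 - p n)) (real n * p n)) sequentially"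
    by eventually_elim (use u_gen_2_le_log p_range d in blast)
  thus "\<exists>n0. \<forall>n\<ge>n0.
           real (u 2 n (p n)) \<le> (2 + \<epsilon>) * log (1 / (1 - p n)) (real n * p n) \<and>
           real (u' 2 n (p n)) \<le> (2 + \<epsilon>) * log (1 / (1 - p n)) (real n * p n)"
    unfolding u_def u'_def eventually_sequentially by blast
qed

end
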